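(* Let $\Pi$ be a finite projective plane of order $n\ge 2$ with point set $P$ and line set $L$. Let $G(\Pi)$ be the graph with vertex set $P\cup L$ in which $P$ is a clique, $L$ is a stable set, and a point $p\in P$ is adjacent to a line $\ell\in L$ iff $p$ is incident with $\ell$ in $\Pi$. Then $G(\Pi)$ is $\cap$-edge simplicial but not CIS.
   Context: A clique $C$ is simplicial if $C=N[v]$ for some vertex $v$; a graph is edge simplicial if every edge lies in a simplicial clique; it is $\cap$-edge simplicial if both it and its complement are edge simplicial. A graph is CIS if every maximal clique and every maximal stable set intersect. *)

theory Defs
  imports Main
begin

definition clique :: "'a set \<Rightarrow> ('a \<Rightarrow> 'a \<Rightarrow> bool) \<Rightarrow> 'a set \<Rightarrow> bool" where
  "clique V E C \<longleftrightarrow> C \<subseteq> V \<and> (\<forall>x\<in>C. \<forall>y\<in>C. x \<noteq> y \<longrightarrow> E x y)"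

definition stable_set :: "'a set \<Rightarrow> ('a \<Rightarrow> 'a \<Rightarrow> bool) \<Rightarrow> 'a set \<Rightarrow> bool" where
  "stable_set V E S \<longleftrightarrow> S \<subseteq> V \<and> (\<forall>x\<in>S. \<forall>y\<in>S. x \<noteq> y \<longrightarrow> \<not> E x y)"

definition maximal_clique :: "'a set \<Rightarrow> ('a \<Rightarrow> 'a \<Rightarrow> bool) \<Rightarrow> 'a set \<Rightarrow> bool" where
  "maximal_clique V E C \<longleftrightarrow> clique V E C \<and> (\<forall>D. clique V E D \<and> C \<subseteq> D \<longrightarrow> D = C)"

definition maximal_stable_set :: "'a set \<Rightarrow> ('a \<Rightarrow> 'a \<Rightarrow> bool) \<Rightarrow> 'a set \<Rightarrow> bool" where
  "maximal_stable_set V E S \<longleftrightarrow> stable_set V E S \<and> (\<forall>T. stable_set V E T \<and> S \<subseteq> T \<longrightarrow> T = S)"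

definition closed_nbhd :: "'a set \<Rightarrow> ('a \<Rightarrow> 'a \<Rightarrow> bool) \<Rightarrow> 'a \<Rightarrow> 'a set" where
  "closed_nbhd V E v = {u \<in> V. u = v \<or> E v u}"

definition simplicial_clique :: "'a set \<Rightarrow> ('a \<Rightarrow> 'a \<Rightarrow> bool) \<Rightarrow> 'a set \<Rightarrow> bool" where
  "simplicial_clique V E C \<longleftrightarrow> clique V E C \<and> (\<exists>v\<in>V. C = closed_nbhd V E v)"

definition edge_simplicial :: "'a set \<Rightarrow> ('a \<Rightarrow> 'a \<Rightarrow> bool) \<Rightarrow> bool" where
  "edge_simplicial V E \<longleftrightarrow>
     (\<forall>x\<in>V. \<forall>y\<in>V. x \<noteq> y \<and> E x y \<longrightarrow> (\<exists>C. simplicial_clique V E C \<and> x \<in> C \<and> y \<in> C))"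

definition compl_graph :: "('a \<Rightarrow> 'a \<Rightarrow> bool) \<Rightarrow> 'a \<Rightarrow> 'a \<Rightarrow> bool" where
  "compl_graph E x y \<longleftrightarrow> x \<noteq> y \<and> \<not> E x y"

definition cap_edge_simplicial :: "'a set \<Rightarrow> ('a \<Rightarrow> 'a \<Rightarrow> bool) \<Rightarrow> bool" where
  "cap_edge_simplicial V E \<longleftrightarrow> edge_simplicial V E \<and> edge_simplicial V (compl_graph E)"

definition CIS :: "'a set \<Rightarrow> ('a \<Rightarrow> 'a \<Rightarrow> bool) \<Rightarrow> bool" where
  "CIS V E \<longleftrightarrow> (\<forall>C S. maximal_clique V E C \<and> maximal_stable_set V E S \<longrightarrow> C \<inter> S \<noteq> {})"

definition projective_plane_of_order ::
  "'p set \<Rightarrow> 'l set \<Rightarrow> ('p \<Rightarrow> 'l \<Rightarrow> bool) \<Rightarrow> nat \<Rightarrow> bool" where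
  "projective_plane_of_order P L I n \<longleftrightarrow>
     finite P \<and> finite L \<and>
     (\<forall>p\<in>P. \<forall>q\<in>P. p \<noteq> q \<longrightarrow> (\<exists>!l. l \<in> L \<and> I p l \<and> I q l)) \<and>
     (\<forall>l\<in>L. \<forall>m\<in>L. l \<noteq> m \<longrightarrow> (\<exists>!p. p \<in> P \<and> I p l \<and> I p m)) \<and>
     (\<exists>F\<subseteq>P. card F = 4 \<and>
        (\<forall>l\<in>L. card {p\<in>F. I p l} \<le> 2)) \<and>
     (\<forall>l\<in>L. card {p\<in>P. I p l} = n + 1)"

definition Gvert :: "'p set \<Rightarrow> 'l set \<Rightarrow> ('p + 'l) set" where
  "Gvert P L = Inl ` P \<union> Inr ` L"

fun Gadj :: "('p \<Rightarrow> 'l \<Rightarrow> bool) \<Rightarrow> ('p + 'l) \<Rightarrow> ('p + 'l) \<Rightarrow> bool" where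
  "Gadj I (Inl p) (Inl q) = (p \<noteq> q)"
| "Gadj I (Inr l) (Inr m) = False"
| "Gadj I (Inl p) (Inr l) = I p l"
| "Gadj I (Inr l) (Inl p) = I p l"

end

theory Submission
  imports Defs
begin

text \<open>In G(Pi) the closed neighbourhood of a line is the line together with its points, a clique;
  since two points lie on a common line, these cliques cover all edges. In the complement the
  closed neighbourhood of a point is the point together with the lines missing it, again a
  clique; two lines miss a common point once n \<ge> 2 (through a point of each line off the other
  runs a third line with a further point), so these cover all edges of the complement. Finally
  the points form a maximal clique and the lines a maximal stable set, and the two are disjoint.\<close>

lemma maximal_cliqueI:
  assumes "clique V E C"
    and "\<And>v. v \<in> V \<Longrightarrow> v \<notin> C \<Longrightarrow> \<exists>u\<in>C. u \<noteq> v \<and> \<not> E u v"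
  shows "maximal_clique V E C"
proof -
  have "D \<subseteq> C" if D: "clique V E D" "C \<subseteq> D" for D
  proof
    fix v assume "v \<in> D"
    show "v \<in> C"
    proof (rule ccontr)
      assume "v \<notin> C"
      then obtain u where "u \<in> C" "u \<noteq> v" "\<not> E u v"
        using assms(2) \<open>v \<in> D\<close> D(1) unfolding clique_def by blast
      then show False using D \<open>v \<in> D\<close> unfolding clique_def by blast
    qed
  qed
  then show ?thesis using assms(1) unfolding maximal_clique_def by blast
qed

lemma maximal_stable_setI:
  assumes "stable_set V E S"
    and "\<And>v. v \<in> V \<Longrightarrow> v \<notin> S \<Longrightarrow> \<exists>u\<in>S. u \<noteq> v \<and> E u v"
  shows "maximal_stable_set V E S"
proof -
  have "T \<subseteq> S" if T: "stable_set V E T" "S \<subseteq> T" for T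
  proof
    fix v assume "v \<in> T"
    show "v \<in> S"
    proof (rule ccontr)
      assume "v \<notin> S"
      then obtain u where "u \<in> S" "u \<noteq> v" "E u v"
        using assms(2) \<open>v \<in> T\<close> T(1) unfolding stable_set_def by blast
      then show False using T \<open>v \<in> T\<close> unfolding stable_set_def by blast
    qed
  qed
  then show ?thesis using assms(1) unfolding maximal_stable_set_def by blast
qed

lemma simplicial_clique_closed_nbhd:
  assumes "v \<in> V" and "clique V E (closed_nbhd V E v)"
  shows "simplicial_clique V E (closed_nbhd V E v)"
  using assms unfolding simplicial_clique_def by blast

lemma closed_nbhd_Gadj_line:
  assumes "l \<in> L"
  shows "closed_nbhd (Gvert P L) (Gadj I) (Inr l) = insert (Inr l) (Inl ` {p\<in>P. I p l})"
  using assms unfolding closed_nbhd_def Gvert_def by auto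

lemma closed_nbhd_compl_Gadj_point:
  assumes "p \<in> P"
  shows "closed_nbhd (Gvert P L) (compl_graph (Gadj I)) (Inl p)
           = insert (Inl p) (Inr ` {l\<in>L. \<not> I p l})"
  using assms unfolding closed_nbhd_def Gvert_def compl_graph_def by auto

lemma simplicial_clique_Gadj_line:
  assumes "l \<in> L"
  shows "simplicial_clique (Gvert P L) (Gadj I) (closed_nbhd (Gvert P L) (Gadj I) (Inr l))"
proof (rule simplicial_clique_closed_nbhd)
  show "Inr l \<in> Gvert P L" using assms by (simp add: Gvert_def)
  show "clique (Gvert P L) (Gadj I) (closed_nbhd (Gvert P L) (Gadj I) (Inr l))"
    unfolding closed_nbhd_Gadj_line[OF assms] clique_def using assms by (auto simp: Gvert_def)
qed

lemma simplicial_clique_compl_Gadj_point: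
  assumes "p \<in> P"
  shows "simplicial_clique (Gvert P L) (compl_graph (Gadj I))
           (closed_nbhd (Gvert P L) (compl_graph (Gadj I)) (Inl p))"
proof (rule simplicial_clique_closed_nbhd)
  show "Inl p \<in> Gvert P L" using assms by (simp add: Gvert_def)
  show "clique (Gvert P L) (compl_graph (Gadj I))
          (closed_nbhd (Gvert P L) (compl_graph (Gadj I)) (Inl p))"
    unfolding closed_nbhd_compl_Gadj_point[OF assms] clique_def compl_graph_def
    using assms by (auto simp: Gvert_def)
qed

lemma edge_simplicial_Gadj:
  assumes joined: "\<And>p q. p \<in> P \<Longrightarrow> q \<in> P \<Longrightarrow> p \<noteq> q \<Longrightarrow> \<exists>l\<in>L. I p l \<and> I q l"
  shows "edge_simplicial (Gvert P L) (Gadj I)"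
  unfolding edge_simplicial_def
proof (intro ballI impI)
  let ?N = "closed_nbhd (Gvert P L) (Gadj I)"
  fix x y
  assume x: "x \<in> Gvert P L" and y: "y \<in> Gvert P L" and xy: "x \<noteq> y \<and> Gadj I x y"
  obtain l where l: "l \<in> L" "x \<in> ?N (Inr l)" "y \<in> ?N (Inr l)"
  proof (cases x; cases y)
    fix p q assume xy_eq: "x = Inl p" "y = Inl q"
    then have "p \<in> P" "q \<in> P" "p \<noteq> q" using x y xy by (auto simp: Gvert_def)
    then obtain l where "l \<in> L" "I p l" "I q l" using joined by blast
    then show thesis using that xy_eq \<open>p \<in> P\<close> \<open>q \<in> P\<close> by (simp add: closed_nbhd_Gadj_line)
  next
    fix p l assume xy_eq: "x = Inl p" "y = Inr l"
    then have "p \<in> P" "l \<in> L" "I p l" using x y xy by (auto simp: Gvert_def)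
    then show thesis using that xy_eq by (simp add: closed_nbhd_Gadj_line)
  next
    fix l p assume xy_eq: "x = Inr l" "y = Inl p"
    then have "p \<in> P" "l \<in> L" "I p l" using x y xy by (auto simp: Gvert_def)
    then show thesis using that xy_eq by (simp add: closed_nbhd_Gadj_line)
  next
    fix l m assume "x = Inr l" "y = Inr m"
    then show thesis using xy by simp
  qed
  then show "\<exists>C. simplicial_clique (Gvert P L) (Gadj I) C \<and> x \<in> C \<and> y \<in> C"
    using simplicial_clique_Gadj_line[OF l(1)] l(2,3) by blast
qed

lemma edge_simplicial_compl_Gadj:
  assumes missed: "\<And>l m. l \<in> L \<Longrightarrow> m \<in> L \<Longrightarrow> l \<noteq> m \<Longrightarrow> \<exists>p\<in>P. \<not> I p l \<and> \<not> I p m"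
  shows "edge_simplicial (Gvert P L) (compl_graph (Gadj I))"
  unfolding edge_simplicial_def
proof (intro ballI impI)
  let ?N = "closed_nbhd (Gvert P L) (compl_graph (Gadj I))"
  fix x y
  assume x: "x \<in> Gvert P L" and y: "y \<in> Gvert P L"
    and xy: "x \<noteq> y \<and> compl_graph (Gadj I) x y"
  obtain p where p: "p \<in> P" "x \<in> ?N (Inl p)" "y \<in> ?N (Inl p)"
  proof (cases x; cases y)
    fix p q assume "x = Inl p" "y = Inl q"
    then show thesis using xy by (simp add: compl_graph_def)
  next
    fix p l assume xy_eq: "x = Inl p" "y = Inr l"
    then have "p \<in> P" "l \<in> L" "\<not> I p l" using x y xy by (auto simp: Gvert_def compl_graph_def)
    then show thesis using that xy_eq by (simp add: closed_nbhd_compl_Gadj_point)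
  next
    fix l p assume xy_eq: "x = Inr l" "y = Inl p"
    then have "p \<in> P" "l \<in> L" "\<not> I p l" using x y xy by (auto simp: Gvert_def compl_graph_def)
    then show thesis using that xy_eq by (simp add: closed_nbhd_compl_Gadj_point)
  next
    fix l m assume xy_eq: "x = Inr l" "y = Inr m"
    then have "l \<in> L" "m \<in> L" "l \<noteq> m" using x y xy by (auto simp: Gvert_def)
    then obtain p where "p \<in> P" "\<not> I p l" "\<not> I p m" using missed by blast
    then show thesis using that xy_eq \<open>l \<in> L\<close> \<open>m \<in> L\<close>
      by (simp add: closed_nbhd_compl_Gadj_point)
  qed
  then show "\<exists>C. simplicial_clique (Gvert P L) (compl_graph (Gadj I)) C \<and> x \<in> C \<and> y \<in> C"
    using simplicial_clique_compl_Gadj_point[OF p(1)] p(2,3) by blast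
qed

lemma maximal_clique_Gadj_points:
  assumes "\<And>l. l \<in> L \<Longrightarrow> \<exists>p\<in>P. \<not> I p l"
  shows "maximal_clique (Gvert P L) (Gadj I) (Inl ` P)"
  using assms by (intro maximal_cliqueI) (auto simp: clique_def Gvert_def)

lemma maximal_stable_set_Gadj_lines:
  assumes "\<And>p. p \<in> P \<Longrightarrow> \<exists>l\<in>L. I p l"
  shows "maximal_stable_set (Gvert P L) (Gadj I) (Inr ` L)"
  using assms by (intro maximal_stable_setI) (auto simp: stable_set_def Gvert_def)

lemma not_CIS_Gadj:
  assumes "\<And>l. l \<in> L \<Longrightarrow> \<exists>p\<in>P. \<not> I p l" and "\<And>p. p \<in> P \<Longrightarrow> \<exists>l\<in>L. I p l"
  shows "\<not> CIS (Gvert P L) (Gadj I)"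
proof
  assume "CIS (Gvert P L) (Gadj I)"
  then have "Inl ` P \<inter> Inr ` L \<noteq> {}"
    by (rule CIS_def[THEN iffD1, rule_format])
       (intro conjI maximal_clique_Gadj_points maximal_stable_set_Gadj_lines assms)
  then show False by auto
qed

lemma card_ge_3_obtain_other:
  assumes "finite S" and "card S \<ge> 3"
  obtains c where "c \<in> S" "c \<noteq> a" "c \<noteq> b"
proof -
  have "card {a, b} \<le> 2" by (simp add: card_insert_if)
  then have "\<not> S \<subseteq> {a, b}"
    using card_mono[of "{a, b}" S] assms by auto
  then show ?thesis using that by blast
qed

context
  fixes P :: "'p set" and L :: "'l set" and I :: "'p \<Rightarrow> 'l \<Rightarrow> bool" and n :: nat
  assumes plane: "projective_plane_of_order P L I n"
begin

lemma projective_plane_line_through: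
  "p \<in> P \<Longrightarrow> q \<in> P \<Longrightarrow> p \<noteq> q \<Longrightarrow> \<exists>l\<in>L. I p l \<and> I q l"
  using plane unfolding projective_plane_of_order_def by blast

lemma projective_plane_meet_unique:
  "l \<in> L \<Longrightarrow> m \<in> L \<Longrightarrow> l \<noteq> m \<Longrightarrow> \<exists>!p. p \<in> P \<and> I p l \<and> I p m"
  using plane unfolding projective_plane_of_order_def by blast

lemma projective_plane_obtain_point_on_line:
  assumes "l \<in> L" and "n \<ge> 2"
  obtains c where "c \<in> P" "I c l" "c \<noteq> a" "c \<noteq> b"
proof -
  have "finite {p\<in>P. I p l}" "card {p\<in>P. I p l} = n + 1"
    using plane assms(1) unfolding projective_plane_of_order_def by auto
  then show ?thesis
    using card_ge_3_obtain_other[of "{p\<in>P. I p l}" a b] that assms(2) by auto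
qed

lemma projective_plane_quadrangle:
  obtains F where "F \<subseteq> P" "finite F" "card F = 4" "\<And>l. l \<in> L \<Longrightarrow> card {p\<in>F. I p l} \<le> 2"
proof -
  obtain F where "F \<subseteq> P" "card F = 4" "\<forall>l\<in>L. card {p\<in>F. I p l} \<le> 2"
    using plane unfolding projective_plane_of_order_def by (elim conjE exE) blast
  moreover have "finite F" using \<open>card F = 4\<close> by (intro card_ge_0_finite) simp
  ultimately show ?thesis using that by blast
qed

lemma projective_plane_point_off_line:
  assumes "l \<in> L"
  shows "\<exists>p\<in>P. \<not> I p l"
proof -
  obtain F where F: "F \<subseteq> P" "card F = 4" "card {p\<in>F. I p l} \<le> 2"
    using projective_plane_quadrangle assms by metis
  then have "{p\<in>F. I p l} \<noteq> F" by auto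
  then show ?thesis using F(1) by blast
qed

lemma projective_plane_line_through_point:
  assumes "p \<in> P"
  shows "\<exists>l\<in>L. I p l"
proof -
  obtain F where "F \<subseteq> P" "finite F" "card F = 4"
    using projective_plane_quadrangle by metis
  moreover obtain q where "q \<in> F" "q \<noteq> p"
    using card_ge_3_obtain_other[of F p p] \<open>finite F\<close> \<open>card F = 4\<close> by force
  ultimately show ?thesis using projective_plane_line_through assms by blast
qed

lemma projective_plane_point_off_two_lines:
  assumes n: "n \<ge> 2" and l: "l \<in> L" and m: "m \<in> L" and "l \<noteq> m"
  shows "\<exists>c\<in>P. \<not> I c l \<and> \<not> I c m"
proof -
  obtain x where x: "x \<in> P" "I x l" "I x m"
    using projective_plane_meet_unique[OF l m \<open>l \<noteq> m\<close>] by blast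
  obtain a where a: "a \<in> P" "I a l" "a \<noteq> x"
    using projective_plane_obtain_point_on_line[OF l n] by metis
  obtain b where b: "b \<in> P" "I b m" "b \<noteq> x"
    using projective_plane_obtain_point_on_line[OF m n] by metis
  have a_off_m: "\<not> I a m" and b_off_l: "\<not> I b l"
    using projective_plane_meet_unique[OF l m \<open>l \<noteq> m\<close>] x a b by blast+
  then obtain k where k: "k \<in> L" "I a k" "I b k"
    using projective_plane_line_through[of a b] a b by blast
  obtain c where c: "c \<in> P" "I c k" "c \<noteq> a" "c \<noteq> b"
    using projective_plane_obtain_point_on_line[OF k(1) n] by metis
  have "k \<noteq> l" "k \<noteq> m" using k a_off_m b_off_l by auto
  then have "\<not> I c l" "\<not> I c m"
    using projective_plane_meet_unique[OF k(1) l] projective_plane_meet_unique[OF k(1) m]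
      a b c k by blast+
  then show ?thesis using c(1) by blast
qed

end

theorem proposition31:
  fixes P :: "'p set" and L :: "'l set" and I :: "'p \<Rightarrow> 'l \<Rightarrow> bool" and n :: nat
  assumes "projective_plane_of_order P L I n" and "n \<ge> 2"
  shows "cap_edge_simplicial (Gvert P L) (Gadj I) \<and> \<not> CIS (Gvert P L) (Gadj I)"
proof -
  have "edge_simplicial (Gvert P L) (Gadj I)"
    by (rule edge_simplicial_Gadj) (use projective_plane_line_through[OF assms(1)] in blast)
  moreover have "edge_simplicial (Gvert P L) (compl_graph (Gadj I))"
    by (rule edge_simplicial_compl_Gadj)
       (use projective_plane_point_off_two_lines[OF assms] in blast)
  moreover have "\<not> CIS (Gvert P L) (Gadj I)"
    by (rule not_CIS_Gadj)
       (use projective_plane_point_off_line[OF assms(1)]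
            projective_plane_line_through_point[OF assms(1)] in blast)+
  ultimately show ?thesis unfolding cap_edge_simplicial_def by blast
qed

end
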